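(* Let $\Sigma$ be a finite set of symbols, $\mathbf{x}\in\Sigma^*$, and $S=\{(T_1,\delta_1),\dots,(T_n,\delta_n)\}$ a perturbation space with $T_k=(\varphi_k,f_k)$, $\varphi_k:\Sigma^{s_k}\to\{0,1\}$, $f_k:\Sigma^{s_k}\to2^{\Sigma^{t_k}}$, $s_k\ge1$. Let $F=\{\mathrm{lstm}(\mathbf{z},h_0)\mid\mathbf{z}\in S(\mathbf{x})\}$. Define boxes $\widehat{H}_{i,j}^{S'}$ for $S'\in\mathcal{D}(S)$ by $\widehat{H}_{0,0}^{\varnothing}=\alpha(\{0^d\})$, $\widehat{H}_{i,j}^{S'}=\bot$ whenever $i<0$ or $j<0$ or $(i,j)=(0,0)$ with $S'\neq\varnothing$, and for $i\ge0$, $j\ge1$: $$\widehat{H}_{i,j}^{S'}=\widehat{\mathrm{lstm}}\big(\alpha(\{x_j\}),\widehat{H}_{i-1,j-1}^{S'}\big)\ \sqcup \bigsqcup_{\substack{1\le k\le n,\ \delta'_k\ge1,\ j\ge s_k\\ \varphi_k(\mathbf{x}_{j-s_k+1:j})=1}}\widehat{\mathrm{lstm}}\big(\alpha(f_k(\mathbf{x}_{j-s_k+1:j})),\widehat{H}_{i-t_k,\,j-s_k}^{S'_{k\downarrow}}\big),$$ and $\widehat{F}=\bigsqcup_{S'\in\mathcal{D}(S)}\bigsqcup_{i\ge0}\widehat{H}_{i,|\mathbf{x}|}^{S'}$. Then $F\subseteq\widehat{F}$, and the number of LSTM cell evaluations needed to compute $\widehat{F}$ is $O\big(|\mathbf{x}|\cdot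 n\cdot\prod_{i=1}^n\delta_i\big)$.
   Context: Strings: $\mathbf{x}_{a:b}=x_a\cdots x_b$, $|\mathbf{x}|$ length, $\epsilon$ empty string. A string transformation is $T=(\varphi,f)$, $\varphi:\Sigma^s\to\{0,1\}$, $f:\Sigma^s\to2^{\Sigma^t}$. A perturbation space is $S=\{(T_1,\delta_1),\dots,(T_n,\delta_n)\}$, $\delta_k\in\mathbb{N}$; $S(\mathbf{x})$ is the set of all $\mathbf{z}$ for which there is a factorization $\mathbf{x}=\mathbf{u}_0\mathbf{w}_1\mathbf{u}_1\cdots\mathbf{w}_m\mathbf{u}_m$ and indices $k_l$ with $\varphi_{k_l}(\mathbf{w}_l)=1$, $\mathbf{z}=\mathbf{u}_0\mathbf{w}'_1\mathbf{u}_1\cdots\mathbf{w}'_m\mathbf{u}_m$, $\mathbf{w}'_l\in f_{k_l}(\mathbf{w}_l)$, and each $k$ occurring at most $\delta_k$ times among the $k_l$. $\mathcal{D}(S)$ is the set of all $\{(T_k,\delta'_k)\}_k$ with $0\le\delta'_k\le\delta_k$; $\varnothing$ is the one with all $\delta'_k=0$; $S'_{k\downarrow}$ is $S'$ with $\delta'_k$ decreased by 1. LSTM: an embedding $e:\Sigma\to\mathbb{R}^m$ and a cell $C:\mathbb{R}^m\times\mathbb{R}^d\to\mathbb{R}^d$ give $\mathrm{lstm}(x,h)=C(e(x),h)$, extended to strings by $\mathrm{lstm}(\epsilon,h)=h$, $\mathrm{lstm}(\mathbf{z},h)=\mathrm{lstm}(z_{|\mathbf{z}|},\mathrm{lstm}(\mathbf{z}_{1:|\mathbf{z}|-1},h))$;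 $h_0=0^d$. Interval domain: a box is a product of closed intervals $[l,u]$; $\bot$ denotes the empty abstract element. For a finite nonempty set $X\subset\mathbb{R}^p$, $\alpha(X)$ is the smallest box containing $X$ (componentwise $[\min,\max]$), and $\alpha(\emptyset)=\bot$; for a set of symbols, $\alpha$ is applied to their embeddings. The join $B\sqcup B'$ is the smallest box containing both ($\bot\sqcup B=B$). $\widehat{C}$ is a sound abstract transformer of the cell: for boxes $B_e\subseteq\mathbb{R}^m$, $B_h\subseteq\mathbb{R}^d$, $\widehat{C}(B_e,B_h)$ is a box containing $C(e,h)$ for all $e\in B_e$, $h\in B_h$, and $\widehat{C}(\cdot,\bot)=\widehat{C}(\bot,\cdot)=\bot$. For a finite set $W$ of strings all of length $t$ and a box $B$, $\widehat{\mathrm{lstm}}(\alpha(W),B)$ is computed by $B_0=B$, $B_r=\widehat{C}(\alpha(\{e(w_r):\mathbf{w}\in W\}),B_{r-1})$ for $r=1,\dots,t$, returning $B_t$ (each step is one LSTM cell evaluation). The inclusion $F\subseteq\widehat{F}$ is read with $\bot$ as the empty set. In the complexity bound the sizes $s_k,t_k$ of the transformations are regarded as constants.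
   Formalization: The number of LSTM cell evaluations, not counting those on a $\bot$ box argument, is at most (T+1) |x| max(1,n) prod_k (delta_k+1) for every T bounding all t_k, instead of $O\big(|\mathbf{x}|\cdot n\cdot\prod_{i=1}^n\delta_i\big)$. Apart from conventions, each condition added here is assumed in the paper as well or is needed for the statement above to hold. *)

theory Defs
  imports "HOL-Analysis.Analysis"
begin

text \<open>A string transformation T = (phi, f) with input size s and output size t:
  phi is meant on strings of length s, f maps strings of length s to sets of strings of length t.\<close>
record 'a trans =
  tr_s :: nat
  tr_t :: nat
  tr_phi :: "'a list \<Rightarrow> bool"
  tr_f :: "'a list \<Rightarrow> 'a list set"

text \<open>1-indexed substring x_{a:b} = x_a ... x_b.\<close>
definition substr :: "'a list \<Rightarrow> nat \<Rightarrow> nat \<Rightarrow> 'a list" where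
  "substr x a b = drop (a - 1) (take b x)"

text \<open>A perturbation space S = {(T_1,delta_1),...,(T_n,delta_n)} is given by the list Ts of
  transformations and the list ds of budgets (same length n; index k-1 stands for k).
  perturb Ts ds x is S(x), following the factorization definition literally.\<close>
definition perturb :: "'a trans list \<Rightarrow> nat list \<Rightarrow> 'a list \<Rightarrow> 'a list set" where
  "perturb Ts ds x = {z. \<exists>(m::nat) (u::nat \<Rightarrow> 'a list) (w::nat \<Rightarrow> 'a list) (w'::nat \<Rightarrow> 'a list) (kk::nat \<Rightarrow> nat).
      x = u 0 @ concat (map (\<lambda>l. w l @ u l) [1..<m+1]) \<and>
      z = u 0 @ concat (map (\<lambda>l. w' l @ u l) [1..<m+1]) \<and>
      (\<forall>l\<in>{1..m}. kk l < length Ts \<and> length (w l) = tr_s (Ts ! kk l) \<and>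
                   tr_phi (Ts ! kk l) (w l) \<and> w' l \<in> tr_f (Ts ! kk l) (w l)) \<and>
      (\<forall>k<length Ts. card {l\<in>{1..m}. kk l = k} \<le> ds ! k)}"

definition subspaces :: "nat list \<Rightarrow> nat list set" where
  "subspaces ds = {dl. length dl = length ds \<and> (\<forall>k<length ds. dl ! k \<le> ds ! k)}"

definition lstm_str :: "(real^'m \<Rightarrow> real^'d \<Rightarrow> real^'d) \<Rightarrow> ('a \<Rightarrow> real^'m) \<Rightarrow> 'a list \<Rightarrow> real^'d \<Rightarrow> real^'d" where
  "lstm_str C e z h = fold (\<lambda>c hh. C (e c) hh) z h"

text \<open>A box: None is bottom, Some (l,u) is the product of the intervals [l_i,u_i].\<close>
type_synonym 'n box = "((real^'n) \<times> (real^'n)) option"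

definition gamma :: "'n::finite box \<Rightarrow> (real^'n) set" where
  "gamma B = (case B of None \<Rightarrow> {}
      | Some (l, u) \<Rightarrow> {v. \<forall>i. l $ i \<le> v $ i \<and> v $ i \<le> u $ i})"

text \<open>alpha of a finite set of vectors (smallest enclosing box); alpha of the empty set is bottom.\<close>
definition alpha :: "(real^'n::finite) set \<Rightarrow> 'n box" where
  "alpha X = (if X = {} then None
      else Some ((\<chi> i. Min ((\<lambda>v. v $ i) ` X)), (\<chi> i. Max ((\<lambda>v. v $ i) ` X))))"

text \<open>Join of a set of boxes (smallest box containing all of them; bottom is neutral).
  Correct as the least upper bound whenever only finitely many members are non-bottom.\<close>
definition Join :: "'n::finite box set \<Rightarrow> 'n box" where
  "Join BB = (let X = {p. Some p \<in> BB} in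
      if X = {} then None
      else Some ((\<chi> i. INF p\<in>X. fst p $ i), (\<chi> i. SUP p\<in>X. snd p $ i)))"

definition join :: "'n::finite box \<Rightarrow> 'n box \<Rightarrow> 'n box" where
  "join B B' = Join {B, B'}"

definition sound_cell :: "(real^'m::finite \<Rightarrow> real^'d::finite \<Rightarrow> real^'d) \<Rightarrow> ('m box \<Rightarrow> 'd box \<Rightarrow> 'd box) \<Rightarrow> bool" where
  "sound_cell C Ch \<longleftrightarrow>
     (\<forall>Be Bh ev hv. ev \<in> gamma Be \<longrightarrow> hv \<in> gamma Bh \<longrightarrow> C ev hv \<in> gamma (Ch Be Bh)) \<and>
     (\<forall>Be. Ch Be None = None) \<and> (\<forall>Bh. Ch None Bh = None)"

text \<open>lstm-hat(alpha(W), B) for a set W of strings of length t: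
  B_r = Ch (alpha {e(w_r) | w \<in> W}) B_{r-1}, r = 1..t (t cell evaluations).\<close>
definition lstm_abs :: "('m::finite box \<Rightarrow> 'd::finite box \<Rightarrow> 'd box) \<Rightarrow> ('a \<Rightarrow> real^'m) \<Rightarrow> 'a list set \<Rightarrow> nat \<Rightarrow> 'd box \<Rightarrow> 'd box" where
  "lstm_abs Ch e W t B = fold (\<lambda>r BB. Ch (alpha ((\<lambda>w. e (w ! r)) ` W)) BB) [0..<t] B"

text \<open>Transformation k is applicable at position j (1-indexed end position) under budget dl.\<close>
definition applicable :: "'a trans list \<Rightarrow> 'a list \<Rightarrow> nat list \<Rightarrow> nat \<Rightarrow> nat \<Rightarrow> bool" where
  "applicable Ts x dl j k \<longleftrightarrow> k < length Ts \<and> 1 \<le> dl ! k \<and> tr_s (Ts ! k) \<le> j \<and>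
      tr_phi (Ts ! k) (substr x (j - tr_s (Ts ! k) + 1) j)"

text \<open>Negative indices give bottom
  (guards below); for j = Suc j' the position j - s_k is written j' - (s_k - 1), which equals
  j - s_k since s_k \<ge> 1 and s_k \<le> j.\<close>
fun Hhat :: "('m::finite box \<Rightarrow> 'd::finite box \<Rightarrow> 'd box) \<Rightarrow> ('a \<Rightarrow> real^'m) \<Rightarrow> 'a trans list \<Rightarrow> 'a list
              \<Rightarrow> nat list \<Rightarrow> nat \<Rightarrow> nat \<Rightarrow> 'd box" where
  "Hhat Ch e Ts x dl i 0 = (if i = 0 \<and> dl = replicate (length Ts) 0 then alpha {0} else None)"
| "Hhat Ch e Ts x dl i (Suc j') =
     join (lstm_abs Ch e {[x ! j']} 1 (if i = 0 then None else Hhat Ch e Ts x dl (i - 1) j'))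
          (Join ((\<lambda>k. lstm_abs Ch e (tr_f (Ts ! k) (substr x (Suc j' - tr_s (Ts ! k) + 1) (Suc j')))
                        (tr_t (Ts ! k))
                        (if tr_t (Ts ! k) \<le> i
                         then Hhat Ch e Ts x (dl[k := dl ! k - 1]) (i - tr_t (Ts ! k)) (j' - (tr_s (Ts ! k) - 1))
                         else None))
                 ` {k. applicable Ts x dl (Suc j') k}))"

definition Fhat :: "('m::finite box \<Rightarrow> 'd::finite box \<Rightarrow> 'd box) \<Rightarrow> ('a \<Rightarrow> real^'m) \<Rightarrow> 'a trans list \<Rightarrow> nat list
              \<Rightarrow> 'a list \<Rightarrow> 'd box" where
  "Fhat Ch e Ts ds x = Join {Hhat Ch e Ts x dl i (length x) | dl i. dl \<in> subspaces ds}"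

text \<open>Cell evaluations needed for entry (dl,i,j), j \<ge> 1: one for the x_j step and t_k for every
  applicable k, but only when the box argument is not bottom (Ch(.,bottom) = bottom needs no
  evaluation).\<close>
definition cell_cost :: "('m::finite box \<Rightarrow> 'd::finite box \<Rightarrow> 'd box) \<Rightarrow> ('a \<Rightarrow> real^'m) \<Rightarrow> 'a trans list \<Rightarrow> 'a list
              \<Rightarrow> nat list \<Rightarrow> nat \<Rightarrow> nat \<Rightarrow> nat" where
  "cell_cost Ch e Ts x dl i j =
     (if 1 \<le> i \<and> Hhat Ch e Ts x dl (i - 1) (j - 1) \<noteq> None then 1 else 0) +
     (\<Sum>k\<in>{k. applicable Ts x dl j k}.
        if tr_t (Ts ! k) \<le> i \<and> Hhat Ch e Ts x (dl[k := dl ! k - 1]) (i - tr_t (Ts ! k)) (j - tr_s (Ts ! k)) \<noteq> None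
        then tr_t (Ts ! k) else 0)"

text \<open>Total cost of computing all entries H_{i,j}^{S'}, S' in D(S), 1 \<le> j \<le> |x|, and
  0 \<le> i \<le> |x| * (1 + sum of the t_k) (beyond which all entries are bottom).\<close>
definition total_cost :: "('m::finite box \<Rightarrow> 'd::finite box \<Rightarrow> 'd box) \<Rightarrow> ('a \<Rightarrow> real^'m) \<Rightarrow> 'a trans list \<Rightarrow> nat list
              \<Rightarrow> 'a list \<Rightarrow> nat" where
  "total_cost Ch e Ts ds x =
     (\<Sum>dl\<in>subspaces ds. \<Sum>j\<in>{1..length x}. \<Sum>i\<in>{0..length x * (1 + sum_list (map tr_t Ts))}.
        cell_cost Ch e Ts x dl i j)"

end

(* Read a perturbation z of x from left to right: each step either copies the next symbol of x
   or replaces a window of x accepted by phi_k with a string from f_k, and the numbers of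
   applications of each T_k form a sub-budget S'.  If such a derivation has consumed j symbols of
   x and produced i symbols of z, then lstm(z) lies in the box H^{S'}_{i,j}, by induction on the
   derivation from the soundness of alpha, of the join and of the abstract cell; the recursion of
   H is exactly this derivation step.

   For the cost: a non-bottom entry H^{S'}_{i,j} satisfies
   i + sum_k delta'_k s_k = j + sum_k delta'_k t_k, because copying advances i and j by one and
   T_k advances them by t_k and s_k.  So for fixed S' and j at most one row i is non-bottom, each
   column costs at most 1 + sum_k t_k cell evaluations, and there are prod_k (delta_k + 1)
   sub-budgets. *)

theory Submission
  imports Defs
begin

lemma Join_eq_None_iff: "Join BB = None \<longleftrightarrow> (\<forall>p. Some p \<notin> BB)"
  by (auto simp: Join_def Let_def)

lemma Join_image_eq_None_iff: "Join (f ` A) = None \<longleftrightarrow> (\<forall>a\<in>A. f a = None)"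
  unfolding Join_eq_None_iff by (metis image_iff not_Some_eq)

lemma join_eq_None_iff: "join A B = None \<longleftrightarrow> A = None \<and> B = None"
  unfolding join_def Join_eq_None_iff by (cases A; cases B) auto

lemma mem_gamma_alpha:
  assumes "finite X" "v \<in> X"
  shows "v \<in> gamma (alpha X)"
  using assms by (auto simp: alpha_def gamma_def)

lemma mem_gamma_Join:
  assumes "finite (Some -` BB)" "B \<in> BB" "v \<in> gamma B"
  shows "v \<in> gamma (Join BB)"
proof -
  obtain l u where B: "B = Some (l, u)" using assms(3) by (cases B) (auto simp: gamma_def)
  let ?X = "Some -` BB"
  have lu: "(l, u) \<in> ?X" using assms(2) B by auto
  have "l $ i \<le> v $ i" "v $ i \<le> u $ i" for i
    using assms(3) B by (auto simp: gamma_def)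
  then have "(INF p\<in>?X. fst p $ i) \<le> v $ i" "v $ i \<le> (SUP p\<in>?X. snd p $ i)" for i
    using lu assms(1) by (auto intro!: cINF_lower2[OF _ lu] cSUP_upper2[OF _ lu])
  then show ?thesis
    using lu unfolding Join_def Let_def gamma_def vimage_def by auto
qed

lemma mem_gamma_join1: "v \<in> gamma A \<Longrightarrow> v \<in> gamma (join A B)"
  unfolding join_def by (rule mem_gamma_Join) (auto intro: finite_vimageI)

lemma mem_gamma_join2: "v \<in> gamma B \<Longrightarrow> v \<in> gamma (join A B)"
  unfolding join_def by (rule mem_gamma_Join) (auto intro: finite_vimageI)

lemma lstm_str_append: "lstm_str C e (z @ w) h = lstm_str C e w (lstm_str C e z h)"
  by (simp add: lstm_str_def)

lemma lstm_abs_neq_None: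
  assumes "\<forall>Be. Ch Be None = None" and "lstm_abs Ch e W t B \<noteq> None"
  shows "B \<noteq> None"
proof
  have "lstm_abs Ch e W t None = None"
    using assms(1) by (induction t) (auto simp: lstm_abs_def)
  then show "B = None \<Longrightarrow> False" using assms(2) by simp
qed

lemma lstm_abs_sound:
  fixes e :: "'a::finite \<Rightarrow> real^'m::finite"
  assumes C: "sound_cell C Ch" and w: "w \<in> W" "length w = t" and h: "h \<in> gamma B"
  shows "lstm_str C e w h \<in> gamma (lstm_abs Ch e W t B)"
proof -
  have "lstm_str C e (take r w) h \<in> gamma (lstm_abs Ch e W r B)" if "r \<le> t" for r
    using that
  proof (induction r)
    case 0
    then show ?case using h by (simp add: lstm_str_def lstm_abs_def)
  next
    case (Suc r)
    have "finite ((\<lambda>w. e (w ! r)) ` W)"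
      by (rule finite_subset[of _ "range e"]) auto
    then have "e (w ! r) \<in> gamma (alpha ((\<lambda>w. e (w ! r)) ` W))"
      using w by (intro mem_gamma_alpha) auto
    with Suc C have "C (e (w ! r)) (lstm_str C e (take r w) h)
        \<in> gamma (Ch (alpha ((\<lambda>w. e (w ! r)) ` W)) (lstm_abs Ch e W r B))"
      unfolding sound_cell_def by auto
    then show ?case
      using Suc.prems w by (simp add: lstm_str_def lstm_abs_def take_Suc_conv_app_nth)
  qed
  from this[of t] show ?thesis using w by simp
qed

lemma Hhat_Suc_neq_NoneE:
  assumes "\<forall>Be. Ch Be None = None" and "Hhat Ch e Ts x dl i (Suc j) \<noteq> None"
  obtains "1 \<le> i" "Hhat Ch e Ts x dl (i - 1) j \<noteq> None"
  | k where "applicable Ts x dl (Suc j) k" "tr_t (Ts ! k) \<le> i"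
      "Hhat Ch e Ts x (dl[k := dl ! k - 1]) (i - tr_t (Ts ! k)) (j - (tr_s (Ts ! k) - 1)) \<noteq> None"
proof -
  let ?H = "\<lambda>k. if tr_t (Ts ! k) \<le> i
      then Hhat Ch e Ts x (dl[k := dl ! k - 1]) (i - tr_t (Ts ! k)) (j - (tr_s (Ts ! k) - 1))
      else None"
  have "(if i = 0 then None else Hhat Ch e Ts x dl (i - 1) j) \<noteq> None
      \<or> (\<exists>k. applicable Ts x dl (Suc j) k \<and> ?H k \<noteq> None)"
    using assms(2) lstm_abs_neq_None[of Ch, OF assms(1)]
    unfolding Hhat.simps join_eq_None_iff Join_image_eq_None_iff by blast
  then show thesis
    using that by (auto split: if_splits)
qed

lemma sum_nth_update_pred:
  fixes g :: "nat \<Rightarrow> nat"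
  assumes "k < length dl" "1 \<le> dl ! k"
  shows "(\<Sum>k'<length dl. dl ! k' * g k') = (\<Sum>k'<length dl. dl[k := dl ! k - 1] ! k' * g k') + g k"
proof -
  let ?R = "{..<length dl} - {k}"
  have "(\<Sum>k'<length dl. dl ! k' * g k') = dl ! k * g k + (\<Sum>k'\<in>?R. dl ! k' * g k')"
    using assms by (simp add: sum.remove)
  moreover have "(\<Sum>k'<length dl. dl[k := dl ! k - 1] ! k' * g k')
      = (dl ! k - 1) * g k + (\<Sum>k'\<in>?R. dl ! k' * g k')"
    using assms by (simp add: sum.remove)
  moreover have "dl ! k * g k = (dl ! k - 1) * g k + g k"
    using assms(2) by (cases "dl ! k") auto
  ultimately show ?thesis by simp
qed

lemma Hhat_balance:
  assumes Ch_None: "\<forall>Be. Ch Be None = None" and s_pos: "\<forall>k<length Ts. 1 \<le> tr_s (Ts ! k)"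
    and "length dl = length Ts" and "Hhat Ch e Ts x dl i j \<noteq> None"
  shows "i + (\<Sum>k<length Ts. dl ! k * tr_s (Ts ! k)) = j + (\<Sum>k<length Ts. dl ! k * tr_t (Ts ! k))"
  using assms(3,4)
proof (induction j arbitrary: dl i rule: less_induct)
  case (less j)
  show ?case
  proof (cases j)
    case 0
    with less.prems show ?thesis by (auto split: if_splits)
  next
    case (Suc j')
    have "Hhat Ch e Ts x dl i (Suc j') \<noteq> None" using less.prems(2) Suc by simp
    then show ?thesis
    proof (cases rule: Hhat_Suc_neq_NoneE[of Ch, OF Ch_None, consumes 1])
      case 1
      with less.IH[of j' dl "i - 1"] less.prems(1) Suc show ?thesis by simp
    next
      case (2 k)
      let ?dl' = "dl[k := dl ! k - 1]"
      have k: "k < length Ts" "1 \<le> dl ! k" "tr_s (Ts ! k) \<le> Suc j'"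
        using 2(1) by (auto simp: applicable_def)
      have "i - tr_t (Ts ! k) + (\<Sum>k'<length Ts. ?dl' ! k' * tr_s (Ts ! k'))
          = j' - (tr_s (Ts ! k) - 1) + (\<Sum>k'<length Ts. ?dl' ! k' * tr_t (Ts ! k'))"
        using less.IH[OF _ _ 2(3)] Suc less.prems(1) by simp
      moreover have pred: "(\<Sum>k'<length Ts. dl ! k' * f (Ts ! k'))
          = (\<Sum>k'<length Ts. ?dl' ! k' * f (Ts ! k')) + f (Ts ! k)" for f :: "_ trans \<Rightarrow> nat"
        using sum_nth_update_pred[of k dl "\<lambda>k. f (Ts ! k)"] k less.prems(1) by simp
      ultimately show ?thesis
        using pred[of tr_s] pred[of tr_t] 2(2) k s_pos[rule_format, OF k(1)] Suc by linarith
    qed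
  qed
qed

corollary Hhat_neq_None_unique:
  assumes "\<forall>Be. Ch Be None = None" and "\<forall>k<length Ts. 1 \<le> tr_s (Ts ! k)"
    and "length dl = length Ts"
    and "Hhat Ch e Ts x dl i j \<noteq> None" and "Hhat Ch e Ts x dl i' j \<noteq> None"
  shows "i = i'"
  using Hhat_balance[of Ch, OF assms(1-4)] Hhat_balance[of Ch, OF assms(1-3,5)] by simp

lemma mem_gamma_Hhat_copy:
  assumes "v \<in> gamma (lstm_abs Ch e {[x ! j]} 1 (Hhat Ch e Ts x dl i j))"
  shows "v \<in> gamma (Hhat Ch e Ts x dl (Suc i) (Suc j))"
  using assms by (simp add: mem_gamma_join1)

lemma mem_gamma_Hhat_transform:
  assumes "length dl = length Ts" and "k < length Ts" and "1 \<le> tr_s (Ts ! k)"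
    and "tr_phi (Ts ! k) (substr x (j + 1) (j + tr_s (Ts ! k)))"
    and "v \<in> gamma (lstm_abs Ch e (tr_f (Ts ! k) (substr x (j + 1) (j + tr_s (Ts ! k))))
            (tr_t (Ts ! k)) (Hhat Ch e Ts x dl i j))"
  shows "v \<in> gamma (Hhat Ch e Ts x (dl[k := dl ! k + 1]) (i + tr_t (Ts ! k)) (j + tr_s (Ts ! k)))"
proof -
  define s where "s = tr_s (Ts ! k)"
  define t where "t = tr_t (Ts ! k)"
  define dl' where "dl' = dl[k := dl ! k + 1]"
  obtain j' where j': "j + s = Suc j'"
    using assms(3) by (metis s_def add_Suc_right le_iff_add plus_1_eq_Suc)
  then have "Suc j' - s + 1 = j + 1" "j' - (s - 1) = j"
    using assms(3) s_def by linarith+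
  have dl'_pred: "dl'[k := dl' ! k - 1] = dl"
    using assms(1,2) by (simp add: dl'_def)
  let ?A = "{k. applicable Ts x dl' (Suc j') k}"
  let ?g = "\<lambda>k. lstm_abs Ch e (tr_f (Ts ! k) (substr x (Suc j' - tr_s (Ts ! k) + 1) (Suc j')))
      (tr_t (Ts ! k))
      (if tr_t (Ts ! k) \<le> i + t
       then Hhat Ch e Ts x (dl'[k := dl' ! k - 1]) (i + t - tr_t (Ts ! k)) (j' - (tr_s (Ts ! k) - 1))
       else None)"
  have "finite ?A"
    by (rule finite_subset[of _ "{..<length Ts}"]) (auto simp: applicable_def)
  moreover have "k \<in> ?A"
    using assms(1,2,4) j' \<open>Suc j' - s + 1 = j + 1\<close> by (simp add: applicable_def dl'_def s_def)
  moreover have "v \<in> gamma (?g k)"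
    using assms(5) j' \<open>Suc j' - s + 1 = j + 1\<close> \<open>j' - (s - 1) = j\<close> dl'_pred
    by (simp add: s_def t_def)
  ultimately have "v \<in> gamma (Join (?g ` ?A))"
    by (intro mem_gamma_Join[of _ "?g k"]) (auto intro: finite_vimageI)
  then have "v \<in> gamma (Hhat Ch e Ts x dl' (i + t) (Suc j'))"
    unfolding Hhat.simps by (rule mem_gamma_join2)
  then show ?thesis
    using j' by (simp only: dl'_def s_def t_def)
qed

(* The factorization in perturb read left to right, one step of the recursion of Hhat at a time;
   dl counts the applications of each transformation. *)
inductive perturb_prefix :: "'a trans list \<Rightarrow> 'a list \<Rightarrow> nat list \<Rightarrow> nat \<Rightarrow> 'a list \<Rightarrow> bool"
  for Ts x where
  Nil: "perturb_prefix Ts x (replicate (length Ts) 0) 0 []"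
| copy: "perturb_prefix Ts x dl j z \<Longrightarrow> j < length x \<Longrightarrow>
    perturb_prefix Ts x dl (Suc j) (z @ [x ! j])"
| transform: "perturb_prefix Ts x dl j z \<Longrightarrow> k < length Ts \<Longrightarrow> j + tr_s (Ts ! k) \<le> length x \<Longrightarrow>
    tr_phi (Ts ! k) (substr x (j + 1) (j + tr_s (Ts ! k))) \<Longrightarrow>
    w' \<in> tr_f (Ts ! k) (substr x (j + 1) (j + tr_s (Ts ! k))) \<Longrightarrow>
    perturb_prefix Ts x (dl[k := dl ! k + 1]) (j + tr_s (Ts ! k)) (z @ w')"

lemma perturb_prefix_length_budget: "perturb_prefix Ts x dl j z \<Longrightarrow> length dl = length Ts"
  by (induction rule: perturb_prefix.induct) auto

lemma lstm_mem_gamma_Hhat: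
  fixes C :: "real^'m::finite \<Rightarrow> real^'d::finite \<Rightarrow> real^'d"
    and e :: "'a::finite \<Rightarrow> real^'m"
  assumes C: "sound_cell C Ch"
    and s_pos: "\<forall>k<length Ts. 1 \<le> tr_s (Ts ! k)"
    and f_length: "\<forall>k<length Ts. \<forall>w. length w = tr_s (Ts ! k) \<longrightarrow>
            (\<forall>w'\<in>tr_f (Ts ! k) w. length w' = tr_t (Ts ! k))"
    and "perturb_prefix Ts x dl j z"
  shows "lstm_str C e z 0 \<in> gamma (Hhat Ch e Ts x dl (length z) j)"
  using assms(4)
proof (induction rule: perturb_prefix.induct)
  case Nil
  then show ?case by (auto simp: lstm_str_def intro: mem_gamma_alpha)
next
  case (copy dl j z)
  have "lstm_str C e [x ! j] (lstm_str C e z 0)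
      \<in> gamma (lstm_abs Ch e {[x ! j]} 1 (Hhat Ch e Ts x dl (length z) j))"
    by (rule lstm_abs_sound[OF C _ _ copy.IH]) auto
  then have "lstm_str C e [x ! j] (lstm_str C e z 0)
      \<in> gamma (Hhat Ch e Ts x dl (Suc (length z)) (Suc j))"
    by (rule mem_gamma_Hhat_copy)
  then show ?case by (simp only: lstm_str_append length_append_singleton)
next
  case (transform dl j z k w')
  have "length (substr x (j + 1) (j + tr_s (Ts ! k))) = tr_s (Ts ! k)"
    using transform.hyps(3) by (simp add: substr_def)
  then have "length w' = tr_t (Ts ! k)"
    using f_length transform.hyps(2,5) by simp
  then have "lstm_str C e w' (lstm_str C e z 0) \<in> gamma (lstm_abs Ch e
      (tr_f (Ts ! k) (substr x (j + 1) (j + tr_s (Ts ! k)))) (tr_t (Ts ! k)) (Hhat Ch e Ts x dl (length z) j))"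
    using transform.hyps(5) by (intro lstm_abs_sound[OF C _ _ transform.IH])
  then have "lstm_str C e (z @ w') 0 \<in> gamma (Hhat Ch e Ts x (dl[k := dl ! k + 1])
      (length z + tr_t (Ts ! k)) (j + tr_s (Ts ! k)))"
    unfolding lstm_str_append
    using perturb_prefix_length_budget[OF transform.hyps(1)] transform.hyps(2,4) s_pos
    by (intro mem_gamma_Hhat_transform) auto
  with \<open>length w' = tr_t (Ts ! k)\<close> show ?case by simp
qed

lemma perturb_prefix_copy_append:
  assumes "perturb_prefix Ts x dl (length p) z" and "x = p @ v @ r"
  shows "perturb_prefix Ts x dl (length p + length v) (z @ v)"
  using assms
proof (induction v arbitrary: p z)
  case Nil
  then show ?case by simp
next
  case (Cons a v)
  have "x ! length p = a" "length p < length x"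
    using Cons.prems(2) by auto
  with Cons.prems(1) have "perturb_prefix Ts x dl (length (p @ [a])) (z @ [a])"
    using perturb_prefix.copy by fastforce
  with Cons.IH[of "p @ [a]" "z @ [a]"] Cons.prems(2) show ?case by simp
qed

lemma card_filter_atLeastAtMost_Suc:
  "card {l \<in> {1..Suc m}. kk l = k} = card {l \<in> {1..m}. kk l = k} + (if kk (Suc m) = k then 1 else 0)"
proof -
  have "{l \<in> {1..Suc m}. kk l = k}
      = (if kk (Suc m) = k then insert (Suc m) {l \<in> {1..m}. kk l = k} else {l \<in> {1..m}. kk l = k})"
    by (auto simp: le_Suc_eq)
  then show ?thesis by simp
qed

lemma perturb_prefix_factorization:
  assumes "\<forall>l\<in>{1..m}. kk l < length Ts \<and> length (w l) = tr_s (Ts ! kk l) \<and>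
      tr_phi (Ts ! kk l) (w l) \<and> w' l \<in> tr_f (Ts ! kk l) (w l)"
    and "x = (u 0 @ concat (map (\<lambda>l. w l @ u l) [1..<m+1])) @ r"
  shows "perturb_prefix Ts x (map (\<lambda>k. card {l \<in> {1..m}. kk l = k}) [0..<length Ts])
           (length (u 0 @ concat (map (\<lambda>l. w l @ u l) [1..<m+1])))
           (u 0 @ concat (map (\<lambda>l. w' l @ u l) [1..<m+1]))"
  using assms
proof (induction m arbitrary: r)
  case 0
  have "map (\<lambda>k. card {l \<in> {1..0::nat}. kk l = k}) [0..<length Ts] = replicate (length Ts) 0"
    by (simp add: map_replicate_const)
  moreover have "perturb_prefix Ts x (replicate (length Ts) 0) (length (u 0)) (u 0)"
    using perturb_prefix_copy_append[of Ts x "replicate (length Ts) 0" "[]" "[]" "u 0" r]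
      perturb_prefix.Nil[of Ts x] 0(2) by simp
  ultimately show ?case by simp
next
  case (Suc m)
  define p where "p = u 0 @ concat (map (\<lambda>l. w l @ u l) [1..<m+1])"
  define z where "z = u 0 @ concat (map (\<lambda>l. w' l @ u l) [1..<m+1])"
  define cnt where "cnt = map (\<lambda>k. card {l \<in> {1..m}. kk l = k}) [0..<length Ts]"
  define k where "k = kk (Suc m)"
  have x: "x = p @ w (Suc m) @ u (Suc m) @ r"
    using Suc.prems(2) by (simp add: p_def)
  have k: "k < length Ts" "length (w (Suc m)) = tr_s (Ts ! k)" "tr_phi (Ts ! k) (w (Suc m))"
      "w' (Suc m) \<in> tr_f (Ts ! k) (w (Suc m))"
    using Suc.prems(1) by (auto simp: k_def)
  have "perturb_prefix Ts x cnt (length p) z"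
    using Suc.IH[of "w (Suc m) @ u (Suc m) @ r"] Suc.prems(1) x by (simp add: p_def z_def cnt_def)
  moreover have "substr x (length p + 1) (length p + tr_s (Ts ! k)) = w (Suc m)"
    using x k(2) by (simp add: substr_def)
  ultimately have "perturb_prefix Ts x (cnt[k := cnt ! k + 1]) (length (p @ w (Suc m))) (z @ w' (Suc m))"
    using perturb_prefix.transform[of Ts x cnt "length p" z k] x k by simp
  then have "perturb_prefix Ts x (cnt[k := cnt ! k + 1])
      (length (p @ w (Suc m)) + length (u (Suc m))) ((z @ w' (Suc m)) @ u (Suc m))"
    using x by (intro perturb_prefix_copy_append[where r = r]) simp_all
  moreover have "map (\<lambda>k. card {l \<in> {1..Suc m}. kk l = k}) [0..<length Ts] = cnt[k := cnt ! k + 1]"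
  proof (rule nth_equalityI)
    fix i assume "i < length (map (\<lambda>k. card {l \<in> {1..Suc m}. kk l = k}) [0..<length Ts])"
    then show "map (\<lambda>k. card {l \<in> {1..Suc m}. kk l = k}) [0..<length Ts] ! i = cnt[k := cnt ! k + 1] ! i"
      using k(1) card_filter_atLeastAtMost_Suc[of m kk i] by (auto simp: cnt_def k_def nth_list_update)
  qed (simp add: cnt_def)
  moreover have "u 0 @ concat (map (\<lambda>l. w l @ u l) [1..<Suc m+1]) = p @ w (Suc m) @ u (Suc m)"
    and "u 0 @ concat (map (\<lambda>l. w' l @ u l) [1..<Suc m+1]) = z @ w' (Suc m) @ u (Suc m)"
    by (simp_all add: p_def z_def)
  ultimately show ?case
    by (simp only: length_append append_assoc add.assoc)
qed

lemma perturb_imp_perturb_prefix: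
  assumes "z \<in> perturb Ts ds x" and "length ds = length Ts"
  obtains dl where "dl \<in> subspaces ds" and "perturb_prefix Ts x dl (length x) z"
proof -
  from assms(1) obtain m u w w' kk where
    x: "x = u 0 @ concat (map (\<lambda>l. w l @ u l) [1..<m+1])" and
    z: "z = u 0 @ concat (map (\<lambda>l. w' l @ u l) [1..<m+1])" and
    windows: "\<forall>l\<in>{1..m}. kk l < length Ts \<and> length (w l) = tr_s (Ts ! kk l) \<and>
        tr_phi (Ts ! kk l) (w l) \<and> w' l \<in> tr_f (Ts ! kk l) (w l)" and
    budget: "\<forall>k<length Ts. card {l \<in> {1..m}. kk l = k} \<le> ds ! k"
    unfolding perturb_def by blast
  let ?dl = "map (\<lambda>k. card {l \<in> {1..m}. kk l = k}) [0..<length Ts]"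
  have "?dl \<in> subspaces ds"
    using budget assms(2) by (simp add: subspaces_def)
  moreover have "x = (u 0 @ concat (map (\<lambda>l. w l @ u l) [1..<m+1])) @ []"
    using x by simp
  from perturb_prefix_factorization[OF windows this]
  have "perturb_prefix Ts x ?dl (length x) z"
    by (simp only: x[symmetric] z[symmetric])
  ultimately show thesis by (rule that)
qed

lemma subspaces_Nil: "subspaces [] = {[]}"
  by (auto simp: subspaces_def)

lemma subspaces_Cons: "subspaces (d # ds) = (\<lambda>(a, dl). a # dl) ` ({..d} \<times> subspaces ds)"
proof
  show "subspaces (d # ds) \<subseteq> (\<lambda>(a, dl). a # dl) ` ({..d} \<times> subspaces ds)"
  proof
    fix dl assume dl: "dl \<in> subspaces (d # ds)"
    then obtain a dl' where "dl = a # dl'"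
      by (cases dl) (auto simp: subspaces_def)
    with dl show "dl \<in> (\<lambda>(a, dl). a # dl) ` ({..d} \<times> subspaces ds)"
      unfolding subspaces_def by force
  qed
qed (auto simp: subspaces_def nth_Cons split: nat.splits)

lemma finite_subspaces: "finite (subspaces ds)"
  by (induction ds) (simp_all add: subspaces_Nil subspaces_Cons)

lemma card_subspaces: "card (subspaces ds) = (\<Prod>k<length ds. ds ! k + 1)"
proof (induction ds)
  case Nil
  then show ?case by (simp add: subspaces_Nil)
next
  case (Cons d ds)
  have "inj_on (\<lambda>(a, dl). a # dl) ({..d} \<times> subspaces ds)"
    by (auto simp: inj_on_def)
  then have "card (subspaces (d # ds)) = (d + 1) * card (subspaces ds)"
    by (simp add: subspaces_Cons card_image card_cartesian_product)
  with Cons.IH show ?case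
    unfolding length_Cons prod.lessThan_Suc_shift by simp
qed

lemma Hhat_neq_None_le:
  assumes "\<forall>Be. Ch Be None = None" and "\<forall>k<length Ts. 1 \<le> tr_s (Ts ! k)"
    and "length ds = length Ts" and "dl \<in> subspaces ds" and "Hhat Ch e Ts x dl i j \<noteq> None"
  shows "i \<le> j + (\<Sum>k<length Ts. ds ! k * tr_t (Ts ! k))"
proof -
  have "length dl = length Ts" using assms(3,4) by (simp add: subspaces_def)
  then have "i \<le> j + (\<Sum>k<length Ts. dl ! k * tr_t (Ts ! k))"
    using Hhat_balance[of Ch, OF assms(1,2) _ assms(5)] by (metis le_add1)
  also have "\<dots> \<le> j + (\<Sum>k<length Ts. ds ! k * tr_t (Ts ! k))"
    using assms(3,4) by (auto simp: subspaces_def intro!: sum_mono mult_right_mono)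
  finally show ?thesis .
qed

(* Join is the least upper bound only of boxes among which finitely many are non-bottom; the
   balance invariant bounds the non-bottom rows. *)
lemma mem_gamma_Fhat:
  assumes "\<forall>Be. Ch Be None = None" and "\<forall>k<length Ts. 1 \<le> tr_s (Ts ! k)"
    and "length ds = length Ts" and "dl \<in> subspaces ds"
    and "v \<in> gamma (Hhat Ch e Ts x dl i (length x))"
  shows "v \<in> gamma (Fhat Ch e Ts ds x)"
proof -
  let ?BB = "{Hhat Ch e Ts x dl i (length x) | dl i. dl \<in> subspaces ds}"
  let ?bound = "length x + (\<Sum>k<length Ts. ds ! k * tr_t (Ts ! k))"
  let ?BB' = "(\<lambda>(dl, i). Hhat Ch e Ts x dl i (length x)) ` (subspaces ds \<times> {..?bound})"
  have "Some -` ?BB \<subseteq> Some -` ?BB'"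
  proof
    fix p assume "p \<in> Some -` ?BB"
    then obtain dl' i' where "Some p = Hhat Ch e Ts x dl' i' (length x)" and "dl' \<in> subspaces ds"
      by auto
    moreover from this have "i' \<le> ?bound"
      using Hhat_neq_None_le[of Ch, OF assms(1-3)] by (metis option.distinct(1))
    ultimately show "p \<in> Some -` ?BB'" by force
  qed
  moreover have "finite (Some -` ?BB')"
    by (intro finite_vimageI finite_imageI finite_cartesian_product finite_subspaces) auto
  ultimately have "finite (Some -` ?BB)" by (rule finite_subset)
  then show ?thesis
    unfolding Fhat_def using assms(4,5) by (intro mem_gamma_Join) auto
qed

lemma sum_if_unique_le:
  fixes c :: nat
  assumes "finite I" and "\<And>i i'. P i \<Longrightarrow> P i' \<Longrightarrow> i = i'"
  shows "(\<Sum>i\<in>I. if P i then c else 0) \<le> c"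
proof -
  have "card {i \<in> I. P i} \<le> 1"
    using assms by (auto simp: card_le_Suc0_iff_eq)
  then have "card {i \<in> I. P i} * c \<le> c"
    by (metis mult_1 mult_right_mono zero_le)
  then show ?thesis
    using assms(1) by (simp add: sum.inter_filter[symmetric])
qed

lemma sum_cell_cost_le:
  assumes "\<forall>Be. Ch Be None = None" and "\<forall>k<length Ts. 1 \<le> tr_s (Ts ! k)"
    and "length dl = length Ts" and "finite I"
  shows "(\<Sum>i\<in>I. cell_cost Ch e Ts x dl i j) \<le> 1 + (\<Sum>k<length Ts. tr_t (Ts ! k))"
proof -
  note unique = Hhat_neq_None_unique[of Ch, OF assms(1,2)]
  let ?A = "{k. applicable Ts x dl j k}"
  let ?copy = "\<lambda>i. if 1 \<le> i \<and> Hhat Ch e Ts x dl (i - 1) (j - 1) \<noteq> None then 1 else 0 :: nat"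
  let ?transform = "\<lambda>k i. if tr_t (Ts ! k) \<le> i \<and>
      Hhat Ch e Ts x (dl[k := dl ! k - 1]) (i - tr_t (Ts ! k)) (j - tr_s (Ts ! k)) \<noteq> None
    then tr_t (Ts ! k) else 0"
  have A: "?A \<subseteq> {..<length Ts}"
    by (auto simp: applicable_def)
  have "(\<Sum>i\<in>I. cell_cost Ch e Ts x dl i j) = (\<Sum>i\<in>I. ?copy i) + (\<Sum>k\<in>?A. \<Sum>i\<in>I. ?transform k i)"
    unfolding cell_cost_def sum.distrib by (simp add: sum.swap[of _ I])
  also have "\<dots> \<le> 1 + (\<Sum>k\<in>?A. tr_t (Ts ! k))"
  proof (intro add_mono sum_mono)
    show "(\<Sum>i\<in>I. ?copy i) \<le> 1"
    proof (rule sum_if_unique_le[OF assms(4)])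
      fix i i'
      assume i: "1 \<le> i \<and> Hhat Ch e Ts x dl (i - 1) (j - 1) \<noteq> None"
        and i': "1 \<le> i' \<and> Hhat Ch e Ts x dl (i' - 1) (j - 1) \<noteq> None"
      from unique[OF assms(3) conjunct2[OF i] conjunct2[OF i']]
      have "i - 1 = i' - 1" .
      with i i' show "i = i'" by linarith
    qed
    show "(\<Sum>i\<in>I. ?transform k i) \<le> tr_t (Ts ! k)" for k
    proof (rule sum_if_unique_le[OF assms(4)])
      fix i i'
      assume i: "tr_t (Ts ! k) \<le> i \<and>
          Hhat Ch e Ts x (dl[k := dl ! k - 1]) (i - tr_t (Ts ! k)) (j - tr_s (Ts ! k)) \<noteq> None"
        and i': "tr_t (Ts ! k) \<le> i' \<and>
          Hhat Ch e Ts x (dl[k := dl ! k - 1]) (i' - tr_t (Ts ! k)) (j - tr_s (Ts ! k)) \<noteq> None"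
      have "length (dl[k := dl ! k - 1]) = length Ts" using assms(3) by simp
      from unique[OF this conjunct2[OF i] conjunct2[OF i']]
      have "i - tr_t (Ts ! k) = i' - tr_t (Ts ! k)" .
      with i i' show "i = i'" by linarith
    qed
  qed
  also have "\<dots> \<le> 1 + (\<Sum>k<length Ts. tr_t (Ts ! k))"
    using A by (simp add: sum_mono2)
  finally show ?thesis .
qed

lemma total_cost_le:
  assumes "\<forall>Be. Ch Be None = None" and "\<forall>k<length Ts. 1 \<le> tr_s (Ts ! k)"
    and "length ds = length Ts"
  shows "total_cost Ch e Ts ds x
    \<le> (\<Prod>k<length Ts. ds ! k + 1) * length x * (1 + (\<Sum>k<length Ts. tr_t (Ts ! k)))"
proof -
  have "total_cost Ch e Ts ds x
      \<le> (\<Sum>dl\<in>subspaces ds. \<Sum>j\<in>{1..length x}. 1 + (\<Sum>k<length Ts. tr_t (Ts ! k)))"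
    unfolding total_cost_def using assms(3)
    by (intro sum_mono sum_cell_cost_le[of Ch, OF assms(1,2)]) (auto simp: subspaces_def)
  also have "\<dots> = (\<Prod>k<length Ts. ds ! k + 1) * length x * (1 + (\<Sum>k<length Ts. tr_t (Ts ! k)))"
    using assms(3) by (simp add: card_subspaces algebra_simps)
  finally show ?thesis .
qed

lemma total_cost_le_uniform:
  assumes "\<forall>Be. Ch Be None = None" and "\<forall>k<length Ts. 1 \<le> tr_s (Ts ! k)"
    and "length ds = length Ts" and "\<forall>k<length Ts. tr_t (Ts ! k) \<le> T"
  shows "total_cost Ch e Ts ds x
    \<le> (T + 1) * length x * max 1 (length Ts) * (\<Prod>k<length Ts. ds ! k + 1)"
proof -
  have "(\<Sum>k<length Ts. tr_t (Ts ! k)) \<le> length Ts * T"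
    using assms(4) sum_bounded_above[of "{..<length Ts}" "\<lambda>k. tr_t (Ts ! k)" T] by simp
  moreover have "1 + length Ts * T \<le> (T + 1) * max 1 (length Ts)"
    by (cases "length Ts") (simp_all add: algebra_simps)
  ultimately have "1 + (\<Sum>k<length Ts. tr_t (Ts ! k)) \<le> (T + 1) * max 1 (length Ts)"
    by linarith
  with total_cost_le[of Ch, OF assms(1-3)]
  have "total_cost Ch e Ts ds x
      \<le> (\<Prod>k<length Ts. ds ! k + 1) * length x * ((T + 1) * max 1 (length Ts))"
    by (meson mult_le_mono2 order_trans)
  then show ?thesis
    by (simp only: ac_simps)
qed

theorem theorem4p2:
  fixes C :: "real^'m::finite \<Rightarrow> real^'d::finite \<Rightarrow> real^'d"
    and e :: "'a::finite \<Rightarrow> real^'m"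
    and Ch :: "'m box \<Rightarrow> 'd box \<Rightarrow> 'd box"
    and Ts :: "'a trans list" and ds :: "nat list" and x :: "'a list"
  assumes "sound_cell C Ch"
    and "length ds = length Ts"
    and "\<forall>k<length Ts. 1 \<le> tr_s (Ts ! k)"
    and "\<forall>k<length Ts. \<forall>w. length w = tr_s (Ts ! k) \<longrightarrow>
            (\<forall>w'\<in>tr_f (Ts ! k) w. length w' = tr_t (Ts ! k))"
  shows "{lstm_str C e z 0 | z. z \<in> perturb Ts ds x} \<subseteq> gamma (Fhat Ch e Ts ds x)
         \<and> (\<forall>T. (\<forall>k<length Ts. tr_t (Ts ! k) \<le> T) \<longrightarrow>
              total_cost Ch e Ts ds x
                \<le> (T + 1) * length x * max 1 (length Ts) * (\<Prod>k<length Ts. ds ! k + 1))"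
proof -
  have Ch_None: "\<forall>Be. Ch Be None = None"
    using assms(1) by (simp add: sound_cell_def)
  have "lstm_str C e z 0 \<in> gamma (Fhat Ch e Ts ds x)" if z: "z \<in> perturb Ts ds x" for z
  proof -
    obtain dl where "dl \<in> subspaces ds" and "perturb_prefix Ts x dl (length x) z"
      using perturb_imp_perturb_prefix[OF z assms(2)] .
    with lstm_mem_gamma_Hhat[OF assms(1,3,4)] show ?thesis
      by (intro mem_gamma_Fhat[of Ch, OF Ch_None assms(3,2)])
  qed
  moreover note total_cost_le_uniform[of Ch, OF Ch_None assms(3,2)]
  ultimately show ?thesis by blast
qed

end
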